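(* Let $\varphi$ be a Musielak–Orlicz function with $\varphi\in A_\infty(\Omega)$. If the stochastic basis $(\mathcal F_n)_{n\in\mathbb Z_+}$ is regular, then $\varphi\in\mathbb S$.
   Context: Let $(\Omega,\mathcal F,\mathbb P)$ be a probability space, $(\mathcal F_n)_{n\in\mathbb Z_+}$ (with $\mathbb Z_+=\{0,1,2,\dots\}$) a nondecreasing sequence of sub-$\sigma$-algebras of $\mathcal F$, and $\mathbb E_n$ the conditional expectation with respect to $\mathcal F_n$. A Musielak–Orlicz function is a map $\varphi:\Omega\times[0,\infty)\to[0,\infty)$ such that for each $x$, $\varphi(x,\cdot)$ is nondecreasing, $\varphi(x,0)=0$, $\lim_{t\to\infty}\varphi(x,t)=\infty$, and for each $t$, $\varphi(\cdot,t)$ is measurable; it is assumed that $\varphi(\cdot,t)$ is strictly positive (for $t>0$) and integrable for every $t$, and one writes $\varphi_n(\cdot,t):=\mathbb E_n(\varphi(\cdot,t))$. For $q\in(1,\infty)$, $\varphi$ satisfies the uniform $A_q(\Omega)$ condition if there is $K>0$ with $\sup_{t>0}\mathbb E_n(\varphi(\cdot,t))\,[\mathbb E_n(\varphi(\cdot,t)^{-1/(q-1)})]^{q-1}\le K$ a.e. for all $n\in\mathbb Z_+$; $\varphi\in A_1(\Omega)$ if $\sup_{t>0}\mathbb E_n(\varphi(\cdot,t))/\varphi(\cdot,t)\le K$ a.e. for all $n$; $A_\infty(\Omega):=\bigcup_{q\ge1}A_q(\Omega)$. The basis is regular if there is $R>0$ such that $f_n\le Rf_{n-1}$ for all $n\ge1$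 and every nonnegative martingale $(f_n)$. $\varphi\in\mathbb S$ means there is $K>0$ with $K^{-1}\varphi_{n-1}(\omega,t)\le\varphi_n(\omega,t)\le K\varphi_{n-1}(\omega,t)$ for all $t\ge0$, $n\ge1$ and a.e. $\omega$. *)

theory Defs
  imports "HOL-Probability.Probability"
begin

definition stoch_basis :: "'a measure \<Rightarrow> (nat \<Rightarrow> 'a measure) \<Rightarrow> bool" where
  "stoch_basis M F \<longleftrightarrow> prob_space M \<and> (\<forall>n. subalgebra M (F n))
      \<and> (\<forall>n m. n \<le> m \<longrightarrow> sets (F n) \<subseteq> sets (F m))"

definition martingale :: "'a measure \<Rightarrow> (nat \<Rightarrow> 'a measure) \<Rightarrow> (nat \<Rightarrow> 'a \<Rightarrow> real) \<Rightarrow> bool" where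
  "martingale M F f \<longleftrightarrow>
     (\<forall>n. integrable M (f n) \<and> f n \<in> borel_measurable (F n)) \<and>
     (\<forall>n. AE x in M. real_cond_exp M (F n) (f (Suc n)) x = f n x)"

definition regular_basis :: "'a measure \<Rightarrow> (nat \<Rightarrow> 'a measure) \<Rightarrow> bool" where
  "regular_basis M F \<longleftrightarrow> (\<exists>R>0. \<forall>f. martingale M F f \<and> (\<forall>n. AE x in M. f n x \<ge> 0) \<longrightarrow>
       (\<forall>n\<ge>1. AE x in M. f n x \<le> R * f (n - 1) x))"

text \<open>Musielak--Orlicz function (only values at t \<ge> 0 are relevant), with the standing
  assumptions: phi(.,t) strictly positive for t > 0 and integrable for every t.\<close>
definition musielak_orlicz :: "'a measure \<Rightarrow> ('a \<Rightarrow> real \<Rightarrow> real) \<Rightarrow> bool" where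
  "musielak_orlicz M \<phi> \<longleftrightarrow>
     (\<forall>x\<in>space M. mono_on {0..} (\<phi> x) \<and> \<phi> x 0 = 0 \<and> filterlim (\<phi> x) at_top at_top
        \<and> (\<forall>t\<ge>0. \<phi> x t \<ge> 0) \<and> (\<forall>t>0. \<phi> x t > 0)) \<and>
     (\<forall>t\<ge>0. (\<lambda>x. \<phi> x t) \<in> borel_measurable M \<and> integrable M (\<lambda>x. \<phi> x t))"

text \<open>Uniform A_q condition, q > 1.  The conditional expectation of phi^{-1/(q-1)} is taken
  in [0,\<infinity>] (it need not be integrable); it is required to be finite and the product bounded.\<close>
definition uniform_Aq :: "'a measure \<Rightarrow> (nat \<Rightarrow> 'a measure) \<Rightarrow> real \<Rightarrow> ('a \<Rightarrow> real \<Rightarrow> real) \<Rightarrow> bool" where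
  "uniform_Aq M F q \<phi> \<longleftrightarrow> (\<exists>K>0. \<forall>n. \<forall>t>0. AE x in M.
      nn_cond_exp M (F n) (\<lambda>y. ennreal (\<phi> y t powr (-1 / (q - 1)))) x < \<infinity> \<and>
      real_cond_exp M (F n) (\<lambda>y. \<phi> y t) x *
        enn2real (nn_cond_exp M (F n) (\<lambda>y. ennreal (\<phi> y t powr (-1 / (q - 1)))) x) powr (q - 1) \<le> K)"

definition uniform_A1 :: "'a measure \<Rightarrow> (nat \<Rightarrow> 'a measure) \<Rightarrow> ('a \<Rightarrow> real \<Rightarrow> real) \<Rightarrow> bool" where
  "uniform_A1 M F \<phi> \<longleftrightarrow> (\<exists>K>0. \<forall>n. \<forall>t>0. AE x in M.
      real_cond_exp M (F n) (\<lambda>y. \<phi> y t) x \<le> K * \<phi> x t)"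

definition uniform_Ainf :: "'a measure \<Rightarrow> (nat \<Rightarrow> 'a measure) \<Rightarrow> ('a \<Rightarrow> real \<Rightarrow> real) \<Rightarrow> bool" where
  "uniform_Ainf M F \<phi> \<longleftrightarrow> uniform_A1 M F \<phi> \<or> (\<exists>q>1. uniform_Aq M F q \<phi>)"

definition class_S :: "'a measure \<Rightarrow> (nat \<Rightarrow> 'a measure) \<Rightarrow> ('a \<Rightarrow> real \<Rightarrow> real) \<Rightarrow> bool" where
  "class_S M F \<phi> \<longleftrightarrow> (\<exists>K>0. \<forall>t\<ge>0. \<forall>n\<ge>1. AE x in M.
      inverse K * real_cond_exp M (F (n - 1)) (\<lambda>y. \<phi> y t) x \<le> real_cond_exp M (F n) (\<lambda>y. \<phi> y t) x \<and>
      real_cond_exp M (F n) (\<lambda>y. \<phi> y t) x \<le> K * real_cond_exp M (F (n - 1)) (\<lambda>y. \<phi> y t) x)"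

end

theory Submission
  imports Defs
begin

text \<open>Write \<open>\<phi>_k\<close> for the conditional expectation of \<open>\<phi>(\<cdot>, t)\<close> given \<open>F k\<close>. Since
  \<open>(\<phi>_k)\<close> is a nonnegative martingale, regularity gives \<open>\<phi>_n \<le> R \<phi>_(n-1)\<close>. For the reverse
  bound: under \<open>A_1\<close>, conditioning \<open>\<phi>_(n-1) \<le> K \<phi>(\<cdot>, t)\<close> on \<open>F n\<close> gives \<open>\<phi>_(n-1) \<le> K \<phi>_n\<close>.
  Under \<open>A_q\<close>, with \<open>w = \<phi>(\<cdot>, t)^(-1/(q-1))\<close>, the conditional Jensen inequality gives
  \<open>\<phi>_n^(-1/(q-1)) \<le> E_n w\<close>, regularity gives \<open>E_n w \<le> R E_(n-1) w\<close>, and the \<open>A_q\<close> condition at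
  level \<open>n - 1\<close> gives \<open>\<phi>_(n-1) (E_(n-1) w)^(q-1) \<le> K\<close>; together \<open>\<phi>_(n-1) \<le> K R^(q-1) \<phi>_n\<close>.\<close>

lemma one_plus_le_powr_neg:
  fixes s v :: real
  assumes s: "s > 0" and v: "v > 0"
  shows "1 + s \<le> s * v + v powr - s"
proof -
  have "v powr (s / (1 + s)) * (v powr - s) powr (1 / (1 + s))
      \<le> s / (1 + s) * v + 1 / (1 + s) * v powr - s"
    by (rule Youngs_inequality_0) (use s v in \<open>auto simp: field_simps\<close>)
  moreover have "v powr (s / (1 + s)) * (v powr - s) powr (1 / (1 + s)) = 1"
    using v by (simp add: powr_powr powr_add[symmetric])
  ultimately have "1 \<le> (s * v + v powr - s) / (1 + s)"
    by (simp add: add_divide_distrib)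
  then show ?thesis
    using s by (simp add: le_divide_eq)
qed

lemma ennreal_mult_add_mult:
  fixes a b c d :: real
  assumes "0 \<le> a" "0 \<le> b" "0 \<le> c" "0 \<le> d"
  shows "ennreal (a * b + c * d) = ennreal a * ennreal b + ennreal c * ennreal d"
  using assms by (simp add: ennreal_plus ennreal_mult)

lemma ennreal_divide_le_of_one_le_mult:
  fixes c :: real and e :: ennreal
  assumes c: "0 < c" and le: "1 \<le> ennreal c * e"
  shows "ennreal (1 / c) \<le> e"
proof -
  have "ennreal (1 / c) \<le> ennreal (1 / c) * (ennreal c * e)"
    using mult_left_mono[OF le] by simp
  also have "\<dots> = e"
    using c by (simp add: mult.assoc[symmetric] ennreal_mult[symmetric])
  finally show ?thesis .
qed

context sigma_finite_subalgebra
begin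

lemma nn_cond_exp_eq_real_cond_exp:
  assumes g: "integrable M g" and nonneg: "\<And>x. x \<in> space M \<Longrightarrow> g x \<ge> 0"
  shows "AE x in M. nn_cond_exp M F (\<lambda>x. ennreal (g x)) x = ennreal (real_cond_exp M F g x)"
proof -
  have [measurable]: "g \<in> borel_measurable M" using g by auto
  have "AE x in M. nn_cond_exp M F (\<lambda>x. ennreal (- g x)) x = nn_cond_exp M F (\<lambda>x. 0) x"
    by (rule nn_cond_exp_cong) (auto simp: ennreal_neg nonneg)
  moreover have "AE x in M. nn_cond_exp M F (\<lambda>x. 0) x = 0"
    using nn_cond_exp_F_meas[of "\<lambda>x. 0"] by simp
  moreover have "AE x in M. nn_cond_exp M F (\<lambda>x. ennreal (g x)) x \<noteq> \<infinity>"
  proof (rule nn_integral_PInf_AE)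
    have "(\<integral>\<^sup>+ x. nn_cond_exp M F (\<lambda>x. ennreal (g x)) x \<partial>M) = (\<integral>\<^sup>+ x. ennreal (g x) \<partial>M)"
      using nn_cond_exp_intg[of "\<lambda>x. 1" "\<lambda>x. ennreal (g x)"] by simp
    then show "(\<integral>\<^sup>+ x. nn_cond_exp M F (\<lambda>x. ennreal (g x)) x \<partial>M) \<noteq> \<infinity>"
      using integrableD(2)[OF g] by simp
  qed simp
  ultimately show ?thesis
    by eventually_elim (simp add: real_cond_exp_def ennreal_enn2real_if)
qed

text \<open>Conditional Jensen inequality for \<open>t \<mapsto> t powr -s\<close>, stated with \<open>nn_cond_exp\<close> because
  \<open>f powr -s\<close> need not be integrable. The proof applies the tangent-line bound
  \<open>one_plus_le_powr_neg\<close> to \<open>l * f\<close>, where the \<open>F\<close>-measurable factor \<open>l = 1 / real_cond_exp M F f\<close>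
  can be pulled out of the conditional expectation.\<close>

lemma nn_cond_exp_powr_neg_ge:
  assumes s: "s > 0" and int: "integrable M f" and pos: "\<And>x. x \<in> space M \<Longrightarrow> f x > 0"
  shows "AE x in M. ennreal (real_cond_exp M F f x powr - s)
    \<le> nn_cond_exp M F (\<lambda>y. ennreal (f y powr - s)) x"
proof -
  have [measurable]: "f \<in> borel_measurable M" using int by auto
  define a where "a = real_cond_exp M F f"
  define w where "w = (\<lambda>y. ennreal (f y powr - s))"
  define l where "l = (\<lambda>x. if a x > 0 then 1 / a x else 1)"
  have [measurable]: "w \<in> borel_measurable M" unfolding w_def by measurable
  have [measurable]: "l \<in> borel_measurable F" unfolding l_def a_def by measurable
  then have [measurable]: "l \<in> borel_measurable M" by (rule measurable_from_subalg[OF subalg])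
  have l_pos: "l x > 0" for x unfolding l_def by auto
  have "AE x in M. ennreal (1 + s) \<le> ennreal (s * l x) * ennreal (f x) + ennreal (l x powr - s) * w x"
  proof (rule AE_I2)
    fix x assume x: "x \<in> space M"
    have "1 + s \<le> s * (l x * f x) + (l x * f x) powr - s"
      using one_plus_le_powr_neg[OF s] l_pos pos x by simp
    also have "\<dots> = s * l x * f x + l x powr - s * f x powr - s"
      using l_pos[of x] pos[OF x] by (simp add: powr_mult)
    finally have "ennreal (1 + s) \<le> ennreal (s * l x * f x + l x powr - s * f x powr - s)"
      by (rule ennreal_leI)
    also have "\<dots> = ennreal (s * l x) * ennreal (f x) + ennreal (l x powr - s) * w x"
      unfolding w_def using s l_pos[of x] pos[OF x] by (intro ennreal_mult_add_mult) auto
    finally show "ennreal (1 + s) \<le> ennreal (s * l x) * ennreal (f x) + ennreal (l x powr - s) * w x" .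
  qed
  then have "AE x in M. nn_cond_exp M F (\<lambda>_. ennreal (1 + s)) x
      \<le> nn_cond_exp M F (\<lambda>x. ennreal (s * l x) * ennreal (f x) + ennreal (l x powr - s) * w x) x"
    by (rule nn_cond_exp_mono) auto
  moreover have "AE x in M. nn_cond_exp M F (\<lambda>_. ennreal (1 + s)) x = ennreal (1 + s)"
    by (rule AE_symmetric[OF nn_cond_exp_F_meas]) simp
  moreover have "AE x in M. nn_cond_exp M F (\<lambda>x. ennreal (s * l x) * ennreal (f x)) x
      + nn_cond_exp M F (\<lambda>x. ennreal (l x powr - s) * w x) x
      = nn_cond_exp M F (\<lambda>x. ennreal (s * l x) * ennreal (f x) + ennreal (l x powr - s) * w x) x"
    by (rule nn_cond_exp_sum) auto
  moreover have "AE x in M. ennreal (s * l x) * nn_cond_exp M F (\<lambda>x. ennreal (f x)) x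
      = nn_cond_exp M F (\<lambda>x. ennreal (s * l x) * ennreal (f x)) x"
    by (rule nn_cond_exp_prod) auto
  moreover have "AE x in M. ennreal (l x powr - s) * nn_cond_exp M F w x
      = nn_cond_exp M F (\<lambda>x. ennreal (l x powr - s) * w x) x"
    by (rule nn_cond_exp_prod) auto
  moreover have "AE x in M. nn_cond_exp M F (\<lambda>x. ennreal (f x)) x = ennreal (a x)"
    unfolding a_def by (rule nn_cond_exp_eq_real_cond_exp[OF int]) (simp add: less_imp_le pos)
  moreover have "AE x in M. a x > 0"
    unfolding a_def by (rule real_cond_exp_gr_c[OF int]) (simp add: pos)
  ultimately show ?thesis
  proof eventually_elim
    case (elim x)
    have l: "l x = 1 / a x" using elim(7) by (simp add: l_def)
    have "ennreal (s * l x) * ennreal (a x) = ennreal s"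
      using s elim(7) by (simp add: l ennreal_mult[symmetric])
    moreover have "l x powr - s = a x powr s"
      using elim(7) by (simp add: l powr_minus_divide powr_divide)
    ultimately have "ennreal (1 + s) \<le> ennreal s + ennreal (a x powr s) * nn_cond_exp M F w x"
      using elim(1-6) by simp
    then have "1 \<le> ennreal (a x powr s) * nn_cond_exp M F w x"
      using s by simp
    then show ?case
      using ennreal_divide_le_of_one_le_mult elim(7) by (simp add: w_def a_def powr_minus_divide)
  qed
qed

lemma real_cond_exp_le_cmult_of_coarser:
  assumes GF: "subalgebra F G" and G: "sigma_finite_subalgebra M G" and int: "integrable M f"
    and le: "AE x in M. real_cond_exp M G f x \<le> K * f x"
  shows "AE x in M. real_cond_exp M G f x \<le> K * real_cond_exp M F f x"
proof -
  have int_G: "integrable M (real_cond_exp M G f)"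
    by (rule sigma_finite_subalgebra.real_cond_exp_int(1)[OF G int])
  have "AE x in M. real_cond_exp M F (real_cond_exp M G f) x = real_cond_exp M G f x"
    by (rule real_cond_exp_F_meas[OF int_G measurable_from_subalg[OF GF]]) simp
  moreover have "AE x in M. real_cond_exp M F (real_cond_exp M G f) x \<le> real_cond_exp M F (\<lambda>x. K * f x) x"
    by (rule real_cond_exp_mono[OF le int_G]) (simp add: int)
  moreover have "AE x in M. real_cond_exp M F (\<lambda>x. K * f x) x = K * real_cond_exp M F f x"
    by (rule real_cond_exp_cmult[OF int])
  ultimately show ?thesis
    by eventually_elim simp
qed

end

lemma stoch_basis_sigma_finite_subalgebra:
  assumes "stoch_basis M F"
  shows "sigma_finite_subalgebra M (F n)"
proof -
  have "prob_space M" "subalgebra M (F n)"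
    using assms unfolding stoch_basis_def by auto
  then have "finite_measure_subalgebra M (F n)"
    unfolding finite_measure_subalgebra_def finite_measure_subalgebra_axioms_def
    using prob_space.finite_measure by blast
  then show ?thesis
    by (rule finite_measure_subalgebra_is_sigma_finite)
qed

lemma stoch_basis_subalgebra:
  assumes "stoch_basis M F" "n \<le> m"
  shows "subalgebra (F m) (F n)"
  using assms unfolding stoch_basis_def subalgebra_def by auto

lemma martingale_real_cond_exp:
  assumes sb: "stoch_basis M F" and int: "integrable M g"
  shows "martingale M F (\<lambda>n. real_cond_exp M (F n) g)"
  unfolding martingale_def
proof (intro conjI allI)
  fix n
  interpret sigma_finite_subalgebra M "F n"
    by (rule stoch_basis_sigma_finite_subalgebra[OF sb])
  show "integrable M (real_cond_exp M (F n) g)"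
    by (rule real_cond_exp_int(1)[OF int])
  show "real_cond_exp M (F n) g \<in> borel_measurable (F n)"
    by simp
  show "AE x in M. real_cond_exp M (F n) (real_cond_exp M (F (Suc n)) g) x = real_cond_exp M (F n) g x"
    using sigma_finite_subalgebra.subalg[OF stoch_basis_sigma_finite_subalgebra[OF sb]]
      stoch_basis_subalgebra[OF sb] int by simp
qed

definition regular_basis_with :: "'a measure \<Rightarrow> (nat \<Rightarrow> 'a measure) \<Rightarrow> real \<Rightarrow> bool" where
  "regular_basis_with M F R \<longleftrightarrow> (\<forall>f. martingale M F f \<and> (\<forall>n. AE x in M. f n x \<ge> 0) \<longrightarrow>
     (\<forall>n\<ge>1. AE x in M. f n x \<le> R * f (n - 1) x))"

lemma regular_basis_iff: "regular_basis M F \<longleftrightarrow> (\<exists>R>0. regular_basis_with M F R)"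
  unfolding regular_basis_def regular_basis_with_def ..

lemma regular_basis_with_real_cond_exp_le:
  assumes sb: "stoch_basis M F" and R: "regular_basis_with M F R"
    and int: "integrable M g" and nonneg: "AE x in M. g x \<ge> 0" and n: "n \<ge> 1"
  shows "AE x in M. real_cond_exp M (F n) g x \<le> R * real_cond_exp M (F (n - 1)) g x"
proof -
  have "\<forall>k. AE x in M. real_cond_exp M (F k) g x \<ge> 0"
    using sigma_finite_subalgebra.real_cond_exp_pos[OF stoch_basis_sigma_finite_subalgebra[OF sb] nonneg] int
    by blast
  then show ?thesis
    using R martingale_real_cond_exp[OF sb int] n unfolding regular_basis_with_def by blast
qed

lemma regular_basis_with_nn_cond_exp_le_on:
  assumes sb: "stoch_basis M F" and R: "regular_basis_with M F R" "0 \<le> R"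
    and [measurable]: "w \<in> borel_measurable M" and nonneg: "\<And>x. x \<in> space M \<Longrightarrow> w x \<ge> 0"
    and B: "B \<in> sets (F (n - 1))" and int: "integrable M (\<lambda>x. indicator B x * w x)" and n: "n \<ge> 1"
  shows "AE x in M. x \<in> B \<longrightarrow> nn_cond_exp M (F n) (\<lambda>y. ennreal (w y)) x
    \<le> ennreal R * nn_cond_exp M (F (n - 1)) (\<lambda>y. ennreal (w y)) x"
proof -
  interpret P: sigma_finite_subalgebra M "F (n - 1)"
    by (rule stoch_basis_sigma_finite_subalgebra[OF sb])
  interpret N: sigma_finite_subalgebra M "F n"
    by (rule stoch_basis_sigma_finite_subalgebra[OF sb])
  define g where "g = (\<lambda>x. indicator B x * w x)"
  have [measurable]: "g \<in> borel_measurable M"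
    using int by (simp add: g_def)
  have BN: "B \<in> sets (F n)"
    using B stoch_basis_subalgebra[OF sb, of "n - 1" n] by (auto simp: subalgebra_def)
  have g_nonneg: "\<And>x. x \<in> space M \<Longrightarrow> g x \<ge> 0"
    using nonneg by (simp add: g_def)
  have g_ennreal: "(\<lambda>x. ennreal (g x)) = (\<lambda>x. indicator B x * ennreal (w x))"
    by (auto simp: g_def indicator_def fun_eq_iff)
  have "AE x in M. real_cond_exp M (F n) g x \<le> R * real_cond_exp M (F (n - 1)) g x"
    by (rule regular_basis_with_real_cond_exp_le[OF sb R(1) _ _ n]) (use int g_nonneg in \<open>auto simp: g_def\<close>)
  moreover have "AE x in M. nn_cond_exp M (F n) (\<lambda>x. ennreal (g x)) x = ennreal (real_cond_exp M (F n) g x)"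
    by (rule N.nn_cond_exp_eq_real_cond_exp) (use int g_nonneg in \<open>auto simp: g_def\<close>)
  moreover have "AE x in M. nn_cond_exp M (F (n - 1)) (\<lambda>x. ennreal (g x)) x
      = ennreal (real_cond_exp M (F (n - 1)) g x)"
    by (rule P.nn_cond_exp_eq_real_cond_exp) (use int g_nonneg in \<open>auto simp: g_def\<close>)
  moreover have "AE x in M. indicator B x * nn_cond_exp M (F n) (\<lambda>y. ennreal (w y)) x
      = nn_cond_exp M (F n) (\<lambda>x. ennreal (g x)) x"
    unfolding g_ennreal by (rule N.nn_cond_exp_prod) (use BN in auto)
  moreover have "AE x in M. indicator B x * nn_cond_exp M (F (n - 1)) (\<lambda>y. ennreal (w y)) x
      = nn_cond_exp M (F (n - 1)) (\<lambda>x. ennreal (g x)) x"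
    unfolding g_ennreal by (rule P.nn_cond_exp_prod) (use B in auto)
  moreover have "AE x in M. real_cond_exp M (F (n - 1)) g x \<ge> 0"
    by (rule P.real_cond_exp_pos) (auto intro!: AE_I2 g_nonneg)
  ultimately show ?thesis
  proof eventually_elim
    case (elim x)
    show ?case
    proof
      assume x: "x \<in> B"
      then have "nn_cond_exp M (F n) (\<lambda>y. ennreal (w y)) x = ennreal (real_cond_exp M (F n) g x)"
        using elim(2,4) by simp
      also have "\<dots> \<le> ennreal (R * real_cond_exp M (F (n - 1)) g x)"
        using elim(1) by (rule ennreal_leI)
      also have "\<dots> = ennreal R * ennreal (real_cond_exp M (F (n - 1)) g x)"
        using R(2) elim(6) by (simp add: ennreal_mult)
      also have "\<dots> = ennreal R * nn_cond_exp M (F (n - 1)) (\<lambda>y. ennreal (w y)) x"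
        using elim(3,5) x by simp
      finally show "nn_cond_exp M (F n) (\<lambda>y. ennreal (w y)) x
          \<le> ennreal R * nn_cond_exp M (F (n - 1)) (\<lambda>y. ennreal (w y)) x" .
    qed
  qed
qed

text \<open>Regularity is stated for martingales of integrable functions; it is transferred to the
  possibly non-integrable \<open>w\<close> by truncating to the \<open>F (n - 1)\<close>-measurable sets where
  \<open>nn_cond_exp M (F (n - 1)) w\<close> is bounded.\<close>

lemma regular_basis_with_nn_cond_exp_le:
  assumes sb: "stoch_basis M F" and R: "regular_basis_with M F R" "0 < R"
    and [measurable]: "w \<in> borel_measurable M" and nonneg: "\<And>x. x \<in> space M \<Longrightarrow> w x \<ge> 0"
    and n: "n \<ge> 1"
  shows "AE x in M. nn_cond_exp M (F n) (\<lambda>y. ennreal (w y)) x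
    \<le> ennreal R * nn_cond_exp M (F (n - 1)) (\<lambda>y. ennreal (w y)) x"
proof -
  interpret P: sigma_finite_subalgebra M "F (n - 1)"
    by (rule stoch_basis_sigma_finite_subalgebra[OF sb])
  interpret prob_space M
    using sb by (simp add: stoch_basis_def)
  let ?W = "\<lambda>y. ennreal (w y)"
  define B where "B N = {x \<in> space M. nn_cond_exp M (F (n - 1)) ?W x \<le> of_nat N}" for N :: nat
  have space_P: "space (F (n - 1)) = space M"
    using P.subalg by (simp add: subalgebra_def)
  have B_P: "B N \<in> sets (F (n - 1))" for N
  proof -
    have "{x \<in> space (F (n - 1)). nn_cond_exp M (F (n - 1)) ?W x \<le> of_nat N} \<in> sets (F (n - 1))"
      by measurable
    then show ?thesis unfolding B_def space_P .
  qed
  then have [measurable]: "B N \<in> sets M" for N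
    using P.subalg by (auto simp: subalgebra_def)
  have "integrable M (\<lambda>x. indicator (B N) x * w x)" for N
  proof (rule integrableI_nonneg)
    have "(\<integral>\<^sup>+ x. ennreal (indicator (B N) x * w x) \<partial>M) = (\<integral>\<^sup>+ x. indicator (B N) x * ?W x \<partial>M)"
      by (intro nn_integral_cong) (simp add: indicator_def)
    also have "\<dots> = (\<integral>\<^sup>+ x. indicator (B N) x * nn_cond_exp M (F (n - 1)) ?W x \<partial>M)"
      by (rule P.nn_cond_exp_intg[symmetric]) (use B_P in auto)
    also have "\<dots> \<le> (\<integral>\<^sup>+ x. of_nat N \<partial>M)"
      by (intro nn_integral_mono) (auto simp: B_def indicator_def)
    also have "\<dots> < \<infinity>"
      by (simp add: emeasure_space_1 ennreal_of_nat_eq_real_of_nat)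
    finally show "(\<integral>\<^sup>+ x. ennreal (indicator (B N) x * w x) \<partial>M) < \<infinity>" .
  qed (use nonneg in \<open>auto intro!: AE_I2\<close>)
  then have "\<forall>N. AE x in M. x \<in> B N \<longrightarrow> nn_cond_exp M (F n) ?W x \<le> ennreal R * nn_cond_exp M (F (n - 1)) ?W x"
    using regular_basis_with_nn_cond_exp_le_on[OF sb R(1) _ _ nonneg B_P _ n] R(2) by simp
  then have "AE x in M. \<forall>N. x \<in> B N \<longrightarrow> nn_cond_exp M (F n) ?W x \<le> ennreal R * nn_cond_exp M (F (n - 1)) ?W x"
    unfolding AE_all_countable .
  with AE_space show ?thesis
  proof eventually_elim
    case (elim x)
    show ?case
    proof (cases "nn_cond_exp M (F (n - 1)) ?W x = \<infinity>")
      case True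
      then show ?thesis
        using R(2) by (simp add: ennreal_mult_top)
    next
      case False
      then obtain N where "nn_cond_exp M (F (n - 1)) ?W x < of_nat N"
        using ennreal_Ex_less_of_nat[of "nn_cond_exp M (F (n - 1)) ?W x"] by (auto simp: less_top)
      then have "x \<in> B N"
        using elim(1) by (simp add: B_def)
      then show ?thesis
        using elim(2) by blast
    qed
  qed
qed

lemma le_mult_powr_of_mult_powr_le:
  fixes q R K a a' b :: real
  assumes q: "q > 1" and R: "R > 0" and a: "a > 0" and a': "a' \<ge> 0" and b: "b \<ge> 0"
    and bound: "a' * b powr (q - 1) \<le> K" and lower: "a powr - (1 / (q - 1)) \<le> R * b"
  shows "a' \<le> K * R powr (q - 1) * a"
proof -
  have "- (1 / (q - 1)) * (q - 1) = -1"
    using q by simp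
  then have "1 / a = (a powr - (1 / (q - 1))) powr (q - 1)"
    using a by (simp only: powr_powr) (simp add: powr_minus_divide)
  also have "\<dots> \<le> (R * b) powr (q - 1)"
    by (rule powr_mono2) (use q lower in auto)
  also have "\<dots> = R powr (q - 1) * b powr (q - 1)"
    using R b by (simp add: powr_mult)
  finally have inv: "1 / a \<le> R powr (q - 1) * b powr (q - 1)" .
  have "a' / a \<le> a' * (R powr (q - 1) * b powr (q - 1))"
    using mult_left_mono[OF inv a'] by simp
  also have "\<dots> \<le> R powr (q - 1) * K"
    using mult_left_mono[OF bound, of "R powr (q - 1)"] R by (simp add: mult_ac)
  finally show ?thesis
    using a by (simp add: divide_le_eq mult_ac)
qed

lemma musielak_orliczD:
  assumes "musielak_orlicz M \<phi>"
  shows "t \<ge> 0 \<Longrightarrow> integrable M (\<lambda>x. \<phi> x t)"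
    and "t \<ge> 0 \<Longrightarrow> x \<in> space M \<Longrightarrow> \<phi> x t \<ge> 0"
    and "t > 0 \<Longrightarrow> x \<in> space M \<Longrightarrow> \<phi> x t > 0"
    and "x \<in> space M \<Longrightarrow> \<phi> x 0 = 0"
  using assms unfolding musielak_orlicz_def by auto

lemma uniform_A1_lower_bound:
  assumes sb: "stoch_basis M F" and mo: "musielak_orlicz M \<phi>" and A1: "uniform_A1 M F \<phi>"
  shows "\<exists>K>0. \<forall>t>0. \<forall>n\<ge>1. AE x in M.
    real_cond_exp M (F (n - 1)) (\<lambda>y. \<phi> y t) x \<le> K * real_cond_exp M (F n) (\<lambda>y. \<phi> y t) x"
proof -
  obtain K where "K > 0"
    and K: "\<And>n t. t > 0 \<Longrightarrow> AE x in M. real_cond_exp M (F n) (\<lambda>y. \<phi> y t) x \<le> K * \<phi> x t"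
    using A1 unfolding uniform_A1_def by blast
  have "AE x in M. real_cond_exp M (F (n - 1)) (\<lambda>y. \<phi> y t) x \<le> K * real_cond_exp M (F n) (\<lambda>y. \<phi> y t) x"
    if "t > 0" "n \<ge> 1" for t n
    using that by (intro sigma_finite_subalgebra.real_cond_exp_le_cmult_of_coarser
        stoch_basis_sigma_finite_subalgebra[OF sb] stoch_basis_subalgebra[OF sb]
        musielak_orliczD(1)[OF mo] K) auto
  with \<open>K > 0\<close> show ?thesis
    by blast
qed

lemma uniform_Aq_lower_bound:
  assumes sb: "stoch_basis M F" and mo: "musielak_orlicz M \<phi>" and q: "q > 1"
    and Aq: "uniform_Aq M F q \<phi>" and R: "regular_basis_with M F R" "R > 0"
  shows "\<exists>K>0. \<forall>t>0. \<forall>n\<ge>1. AE x in M.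
    real_cond_exp M (F (n - 1)) (\<lambda>y. \<phi> y t) x \<le> K * real_cond_exp M (F n) (\<lambda>y. \<phi> y t) x"
proof -
  define s where "s = 1 / (q - 1)"
  have s: "s > 0" and minus_s: "-1 / (q - 1) = - s"
    using q by (simp_all add: s_def)
  obtain K where "K > 0" and K: "\<And>n t. t > 0 \<Longrightarrow> AE x in M.
      nn_cond_exp M (F n) (\<lambda>y. ennreal (\<phi> y t powr - s)) x < \<infinity> \<and>
      real_cond_exp M (F n) (\<lambda>y. \<phi> y t) x *
        enn2real (nn_cond_exp M (F n) (\<lambda>y. ennreal (\<phi> y t powr - s)) x) powr (q - 1) \<le> K"
    using Aq unfolding uniform_Aq_def minus_s by blast
  have "AE x in M. real_cond_exp M (F (n - 1)) (\<lambda>y. \<phi> y t) x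
      \<le> K * R powr (q - 1) * real_cond_exp M (F n) (\<lambda>y. \<phi> y t) x"
    if t: "t > 0" and n: "n \<ge> 1" for t n
  proof -
    interpret N: sigma_finite_subalgebra M "F n"
      by (rule stoch_basis_sigma_finite_subalgebra[OF sb])
    interpret P: sigma_finite_subalgebra M "F (n - 1)"
      by (rule stoch_basis_sigma_finite_subalgebra[OF sb])
    let ?f = "\<lambda>y. \<phi> y t" and ?w = "\<lambda>y. ennreal (\<phi> y t powr - s)"
    have int: "integrable M ?f" and pos: "\<And>x. x \<in> space M \<Longrightarrow> ?f x > 0"
      using musielak_orliczD[OF mo] t by auto
    have [measurable]: "?f \<in> borel_measurable M"
      using int by auto
    have "AE x in M. ennreal (real_cond_exp M (F n) ?f x powr - s) \<le> nn_cond_exp M (F n) ?w x"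
      by (rule N.nn_cond_exp_powr_neg_ge[OF s int pos])
    moreover have "AE x in M. nn_cond_exp M (F n) ?w x \<le> ennreal R * nn_cond_exp M (F (n - 1)) ?w x"
      by (rule regular_basis_with_nn_cond_exp_le[OF sb R _ _ n]) auto
    moreover note K[OF t, of "n - 1"]
    moreover have "AE x in M. real_cond_exp M (F n) ?f x > 0"
      by (rule N.real_cond_exp_gr_c[OF int]) (simp add: pos)
    moreover have "AE x in M. real_cond_exp M (F (n - 1)) ?f x \<ge> 0"
      by (rule P.real_cond_exp_pos) (auto intro!: AE_I2 less_imp_le pos)
    ultimately show ?thesis
    proof eventually_elim
      case (elim x)
      define b where "b = enn2real (nn_cond_exp M (F (n - 1)) ?w x)"
      have b: "nn_cond_exp M (F (n - 1)) ?w x = ennreal b" "b \<ge> 0"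
        using elim(3) by (auto simp: b_def less_top)
      have "ennreal (real_cond_exp M (F n) ?f x powr - s) \<le> ennreal (R * b)"
        using elim(1,2) b R(2) by (simp add: ennreal_mult)
      then have "real_cond_exp M (F n) ?f x powr - s \<le> R * b"
        using b R(2) by (simp add: ennreal_le_iff)
      then show ?case
        using le_mult_powr_of_mult_powr_le[OF q R(2) elim(4) elim(5) b(2)] elim(3)
        by (simp add: b_def s_def)
    qed
  qed
  then show ?thesis
    using \<open>K > 0\<close> R(2) by (intro exI[of _ "K * R powr (q - 1)"]) auto
qed

lemma class_SI:
  assumes sb: "stoch_basis M F" and mo: "musielak_orlicz M \<phi>"
    and R: "regular_basis_with M F R" "R > 0" and K: "K > 0"
    and lower: "\<And>t n. t > 0 \<Longrightarrow> n \<ge> 1 \<Longrightarrow> AE x in M.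
      real_cond_exp M (F (n - 1)) (\<lambda>y. \<phi> y t) x \<le> K * real_cond_exp M (F n) (\<lambda>y. \<phi> y t) x"
  shows "class_S M F \<phi>"
proof -
  define C where "C = max K R"
  have C: "C > 0" "K \<le> C" "R \<le> C"
    using K by (auto simp: C_def)
  have "AE x in M.
      inverse C * real_cond_exp M (F (n - 1)) (\<lambda>y. \<phi> y t) x \<le> real_cond_exp M (F n) (\<lambda>y. \<phi> y t) x \<and>
      real_cond_exp M (F n) (\<lambda>y. \<phi> y t) x \<le> C * real_cond_exp M (F (n - 1)) (\<lambda>y. \<phi> y t) x"
    if t: "t \<ge> 0" and n: "n \<ge> 1" for t n
  proof -
    interpret N: sigma_finite_subalgebra M "F n"
      by (rule stoch_basis_sigma_finite_subalgebra[OF sb])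
    interpret P: sigma_finite_subalgebra M "F (n - 1)"
      by (rule stoch_basis_sigma_finite_subalgebra[OF sb])
    let ?f = "\<lambda>y. \<phi> y t"
    have int: "integrable M ?f" and nonneg: "AE x in M. ?f x \<ge> 0"
      using musielak_orliczD[OF mo] t by (auto intro!: AE_I2)
    have meas: "?f \<in> borel_measurable M"
      using int by auto
    have nonneg_n: "AE x in M. real_cond_exp M (F n) ?f x \<ge> 0"
      by (rule N.real_cond_exp_pos[OF nonneg meas])
    have lower_t: "AE x in M. real_cond_exp M (F (n - 1)) ?f x \<le> K * real_cond_exp M (F n) ?f x"
    proof (cases "t = 0")
      case True
      have "AE x in M. real_cond_exp M (F (n - 1)) ?f x = real_cond_exp M (F (n - 1)) (\<lambda>_. 0) x"
        by (rule P.real_cond_exp_cong) (use meas in \<open>auto intro!: AE_I2 simp: True musielak_orliczD(4)[OF mo]\<close>)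
      moreover have "AE x in M. real_cond_exp M (F (n - 1)) (\<lambda>_. 0) x = 0"
        by (rule P.real_cond_exp_F_meas) simp_all
      ultimately show ?thesis
        using nonneg_n by eventually_elim (use K in simp)
    qed (use t n lower in auto)
    from regular_basis_with_real_cond_exp_le[OF sb R(1) int nonneg n] lower_t nonneg_n
      P.real_cond_exp_pos[OF nonneg meas]
    show ?thesis
    proof eventually_elim
      case (elim x)
      have "real_cond_exp M (F (n - 1)) ?f x \<le> C * real_cond_exp M (F n) ?f x"
        using elim(2) mult_right_mono[OF C(2) elim(3)] by linarith
      moreover have "real_cond_exp M (F n) ?f x \<le> C * real_cond_exp M (F (n - 1)) ?f x"
        using elim(1) mult_right_mono[OF C(3) elim(4)] by linarith
      ultimately show ?case
        using C(1) by (simp add: field_simps)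
    qed
  qed
  then show ?thesis
    unfolding class_S_def using C(1) by blast
qed

theorem lemma2p8:
  fixes M :: "'a measure" and F :: "nat \<Rightarrow> 'a measure" and \<phi> :: "'a \<Rightarrow> real \<Rightarrow> real"
  assumes "stoch_basis M F"
    and "musielak_orlicz M \<phi>"
    and "uniform_Ainf M F \<phi>"
    and "regular_basis M F"
  shows "class_S M F \<phi>"
proof -
  obtain R where R: "regular_basis_with M F R" "R > 0"
    using assms(4) by (auto simp: regular_basis_iff)
  obtain K where "K > 0" and lower: "\<forall>t>0. \<forall>n\<ge>1. AE x in M.
      real_cond_exp M (F (n - 1)) (\<lambda>y. \<phi> y t) x \<le> K * real_cond_exp M (F n) (\<lambda>y. \<phi> y t) x"
    using assms(3) uniform_A1_lower_bound[OF assms(1,2)] uniform_Aq_lower_bound[OF assms(1,2) _ _ R]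
    unfolding uniform_Ainf_def by blast
  show ?thesis
    by (rule class_SI[OF assms(1,2) R \<open>K > 0\<close>]) (use lower in auto)
qed

end
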